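(* Let $L_0\in\mathbb{R}^{n\times n}$ satisfy the incoherence condition with parameter $\mu$, let $\lambda>0$, let $S\in\mathbb{R}^{n\times n}$ be a fixed matrix, and let $0<\rho_s\le 1/2$. Consider two random models for a sparse matrix: (A) (random signs) $S_0^{A}=|S|\circ E$, where $E$ has i.i.d. entries equal to $1$ with probability $\rho_s$, $-1$ with probability $\rho_s$, and $0$ with probability $1-2\rho_s$; i.e. the locations follow the Bernoulli model with parameter $2\rho_s$ and the signs are i.i.d. symmetric $\pm1$, independent of the locations; (B) (fixed signs) $S_0^{B}=\mathcal{P}_\Omega S$, where $\Omega\sim\mathrm{Ber}(\rho_s)$. Then the probability that PCP with input $L_0+S_0^B$ is exact (its solution is $(L_0,S_0^B)$) is at least the probability that PCP with input $L_0+S_0^A$ is exact (its unique solution is $(L_0,S_0^A)$). In particular, if PCP is exact with high probability under model (A), it is exact with at least the same probability under model (B).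
   Context: PCP with parameter $\lambda$ and input $M$: minimize $\|L\|_*+\lambda\|S\|_1$ subject to $L+S=M$ ($\|\cdot\|_*$ nuclear norm, $\|S\|_1=\sum_{ij}|S_{ij}|$). $|S|$ is the entrywise absolute value and $\circ$ the entrywise (Hadamard) product. $\Omega\sim\mathrm{Ber}(\rho)$ means each $(i,j)\in[n]\times[n]$ belongs to $\Omega$ independently with probability $\rho$; $\mathcal{P}_\Omega X$ keeps entries of $X$ in $\Omega$ and zeroes the rest. Writing $L_0=U\Sigma V^*$ (reduced SVD, $U,V\in\mathbb{R}^{n\times r}$ with orthonormal columns, $r=\operatorname{rank}L_0$), incoherence with parameter $\mu$ means $\max_i\|U^*e_i\|^2\le\mu r/n$, $\max_i\|V^*e_i\|^2\le\mu r/n$, $\|UV^*\|_\infty\le\sqrt{\mu r}/n$, with $\|X\|_\infty=\max_{ij}|X_{ij}|$. *)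

theory Defs
  imports "HOL-Analysis.Analysis" "HOL-Probability.Probability"
begin

definition diag_mat :: "('n::finite \<Rightarrow> real) \<Rightarrow> real^'n^'n" where
  "diag_mat s = (\<chi> i j. if i = j then s i else 0)"

definition is_svd :: "real^'n^'n \<Rightarrow> real^'n^'n \<Rightarrow> ('n::finite \<Rightarrow> real) \<Rightarrow> real^'n^'n \<Rightarrow> bool" where
  "is_svd L U s V \<longleftrightarrow> orthogonal_matrix U \<and> orthogonal_matrix V \<and> (\<forall>j. s j \<ge> 0)
     \<and> L = U ** diag_mat s ** transpose V"

definition nuclear_norm :: "real^'n^'n \<Rightarrow> real" where
  "nuclear_norm L = (THE t. \<exists>U s V. is_svd L U s V \<and> t = (\<Sum>j\<in>UNIV. s j))"

definition l1_norm :: "real^'n^'n \<Rightarrow> real" where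
  "l1_norm S = (\<Sum>i\<in>UNIV. \<Sum>j\<in>UNIV. \<bar>S $ i $ j\<bar>)"

definition pcp_obj :: "real \<Rightarrow> real^'n^'n \<Rightarrow> real^'n^'n \<Rightarrow> real" where
  "pcp_obj lam L S = nuclear_norm L + lam * l1_norm S"

definition pcp_exact :: "real \<Rightarrow> real^'n^'n \<Rightarrow> real^'n^'n \<Rightarrow> real^'n^'n \<Rightarrow> bool" where
  "pcp_exact lam M L0 S0 \<longleftrightarrow> L0 + S0 = M \<and>
     (\<forall>L S. L + S = M \<and> (L, S) \<noteq> (L0, S0) \<longrightarrow> pcp_obj lam L0 S0 < pcp_obj lam L S)"

text \<open>Incoherence with parameter mu. The reduced SVD U_r Sigma V_r^* consists of the
  columns j of a full SVD with s j \<noteq> 0 (so r = rank L0 = card of these j).\<close>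
definition incoherent :: "real \<Rightarrow> real^'n^'n \<Rightarrow> bool" where
  "incoherent mu L0 \<longleftrightarrow> (\<exists>U s V. is_svd L0 U s V \<and>
     (let J = {j. s j \<noteq> 0}; r = real (rank L0); n = real CARD('n) in
       (\<forall>i. (\<Sum>j\<in>J. (U $ i $ j)^2) \<le> mu * r / n) \<and>
       (\<forall>i. (\<Sum>j\<in>J. (V $ i $ j)^2) \<le> mu * r / n) \<and>
       (\<forall>i k. \<bar>\<Sum>j\<in>J. U $ i $ j * V $ k $ j\<bar> \<le> sqrt (mu * r) / n)))"

definition sign_entry_pmf :: "real \<Rightarrow> real pmf" where
  "sign_entry_pmf rho = bernoulli_pmf (2 * rho) \<bind>
     (\<lambda>b. if b then map_pmf (\<lambda>c. if c then 1 else -1) (bernoulli_pmf (1/2)) else return_pmf 0)"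

definition model_A_pmf :: "real \<Rightarrow> ('n::finite \<times> 'n \<Rightarrow> real) pmf" where
  "model_A_pmf rho = Pi_pmf UNIV 0 (\<lambda>_. sign_entry_pmf rho)"

definition model_B_pmf :: "real \<Rightarrow> ('n::finite \<times> 'n \<Rightarrow> bool) pmf" where
  "model_B_pmf rho = Pi_pmf UNIV False (\<lambda>_. bernoulli_pmf rho)"

definition S0_A :: "real^'n^'n \<Rightarrow> ('n::finite \<times> 'n \<Rightarrow> real) \<Rightarrow> real^'n^'n" where
  "S0_A S E = (\<chi> i j. \<bar>S $ i $ j\<bar> * E (i, j))"

definition S0_B :: "real^'n^'n \<Rightarrow> ('n::finite \<times> 'n \<Rightarrow> bool) \<Rightarrow> real^'n^'n" where
  "S0_B S \<Omega> = (\<chi> i j. if \<Omega> (i, j) then S $ i $ j else 0)"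

end

theory Submission
  imports Defs
begin

(* Couple the two models through the map E |-> Omega = {(i,j). E(i,j) = sign S(i,j)}: each entry
   of E carries the sign of S with probability rho, independently, so Omega ~ Ber(rho).  Then
   S0^A = P_Omega S + R with R supported off Omega, so the l1 norm splits, and deleting R from the
   sparse component can only keep PCP exact.  Hence the event "PCP exact under (A)" is contained
   in the pull-back of the event "PCP exact under (B)". *)

lemma Pi_pmf_map_dependent:
  assumes "finite A"
  shows "Pi_pmf A d' (\<lambda>x. map_pmf (g x) (p x)) =
         map_pmf (\<lambda>h x. if x \<in> A then g x (h x) else d') (Pi_pmf A d p)"
proof -
  have "Pi_pmf A d' (\<lambda>x. map_pmf (g x) (p x)) =
          Pi_pmf A d' (\<lambda>x. p x \<bind> (\<lambda>y. return_pmf (g x y)))"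
    by (simp add: map_pmf_def)
  also have "\<dots> = Pi_pmf A d p \<bind> (\<lambda>h. Pi_pmf A d' (\<lambda>x. return_pmf (g x (h x))))"
    by (rule Pi_pmf_bind[OF assms])
  also have "\<dots> = map_pmf (\<lambda>h x. if x \<in> A then g x (h x) else d') (Pi_pmf A d p)"
    using assms by (simp add: map_pmf_def)
  finally show ?thesis .
qed

lemma pmf_sign_entry_pmf_sign:
  assumes "0 \<le> rho" "rho \<le> 1/2" "c = 1 \<or> c = -1"
  shows "pmf (sign_entry_pmf rho) c = rho"
proof -
  let ?sign = "\<lambda>b::bool. if b then 1 else -1 :: real"
  obtain b0 where c: "c = ?sign b0" using assms(3) by (metis (full_types))
  have "inj ?sign" by (auto simp: inj_def)
  then have "pmf (map_pmf ?sign (bernoulli_pmf (1/2))) (?sign b0) = pmf (bernoulli_pmf (1/2)) b0"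
    by (rule pmf_map_inj')
  then have "pmf (map_pmf ?sign (bernoulli_pmf (1/2))) c = 1/2"
    by (simp add: c)
  then show ?thesis
    using assms unfolding sign_entry_pmf_def by (auto simp: pmf_bind)
qed

lemma map_pmf_sign_entry_eq_sign:
  assumes "0 \<le> rho" "rho \<le> 1/2" "c = 1 \<or> c = -1"
  shows "map_pmf (\<lambda>e. e = c) (sign_entry_pmf rho) = bernoulli_pmf rho"
proof (rule pmf_eqI)
  fix b :: bool
  have "pmf (map_pmf (\<lambda>e. e = c) (sign_entry_pmf rho)) True = rho"
    using pmf_sign_entry_pmf_sign[OF assms] by (simp add: pmf_map vimage_def measure_pmf_single)
  moreover have "pmf (map_pmf (\<lambda>e. e = c) (sign_entry_pmf rho)) False = 1 - rho"
    using pmf_False_conv_True calculation by metis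
  ultimately show "pmf (map_pmf (\<lambda>e. e = c) (sign_entry_pmf rho)) b = pmf (bernoulli_pmf rho) b"
    using assms by (cases b) auto
qed

lemma l1_norm_add_le: "l1_norm (A + B) \<le> l1_norm A + l1_norm (B :: real^'n::finite^'n)"
  unfolding l1_norm_def sum.distrib[symmetric]
  by (intro sum_mono) (simp add: abs_triangle_ineq)

lemma l1_norm_add_disjoint:
  fixes A B :: "real^'n::finite^'n"
  assumes "\<And>i j. A $ i $ j = 0 \<or> B $ i $ j = 0"
  shows "l1_norm (A + B) = l1_norm A + l1_norm B"
proof -
  have "\<bar>(A + B) $ i $ j\<bar> = \<bar>A $ i $ j\<bar> + \<bar>B $ i $ j\<bar>" for i j
    using assms[of i j] by auto
  then show ?thesis
    unfolding l1_norm_def by (simp add: sum.distrib)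
qed

lemma pcp_exact_drop_sparse_part:
  fixes L0 S1 R :: "real^'n::finite^'n"
  assumes exact: "pcp_exact lam (L0 + (S1 + R)) L0 (S1 + R)" and "lam \<ge> 0"
    and split: "l1_norm (S1 + R) = l1_norm S1 + l1_norm R"
  shows "pcp_exact lam (L0 + S1) L0 S1"
  unfolding pcp_exact_def
proof (intro conjI allI impI)
  fix L S assume LS: "L + S = L0 + S1 \<and> (L, S) \<noteq> (L0, S1)"
  then have "L + (S + R) = L0 + (S1 + R)" "(L, S + R) \<noteq> (L0, S1 + R)"
    by (auto simp: add.assoc)
  with exact have "pcp_obj lam L0 (S1 + R) < pcp_obj lam L (S + R)"
    unfolding pcp_exact_def by blast
  moreover have "lam * l1_norm (S + R) \<le> lam * (l1_norm S + l1_norm R)"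
    by (intro mult_left_mono l1_norm_add_le \<open>lam \<ge> 0\<close>)
  ultimately show "pcp_obj lam L0 S1 < pcp_obj lam L S"
    using split unfolding pcp_obj_def by (simp add: distrib_left)
qed simp

definition entry_sign :: "real^'n^'n \<Rightarrow> 'n::finite \<times> 'n \<Rightarrow> real" where
  "entry_sign S = (\<lambda>(i, j). if S $ i $ j \<ge> 0 then 1 else -1)"

definition sign_match :: "real^'n^'n \<Rightarrow> ('n::finite \<times> 'n \<Rightarrow> real) \<Rightarrow> 'n \<times> 'n \<Rightarrow> bool" where
  "sign_match S E = (\<lambda>x. E x = entry_sign S x)"

lemma S0_A_split_sign_match:
  fixes S :: "real^'n::finite^'n" and E :: "'n \<times> 'n \<Rightarrow> real"
  defines "R \<equiv> S0_A S E - S0_B S (sign_match S E)"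
  shows "S0_A S E = S0_B S (sign_match S E) + R"
    and "l1_norm (S0_B S (sign_match S E) + R) = l1_norm (S0_B S (sign_match S E)) + l1_norm R"
proof -
  show "S0_A S E = S0_B S (sign_match S E) + R"
    by (simp add: R_def)
  have "S0_B S (sign_match S E) $ i $ j = 0 \<or> R $ i $ j = 0" for i j
    by (auto simp: R_def S0_A_def S0_B_def sign_match_def entry_sign_def)
  then show "l1_norm (S0_B S (sign_match S E) + R) = l1_norm (S0_B S (sign_match S E)) + l1_norm R"
    by (rule l1_norm_add_disjoint)
qed

lemma pcp_exact_S0_A_imp_S0_B:
  fixes L0 S :: "real^'n::finite^'n"
  assumes "lam \<ge> 0" "pcp_exact lam (L0 + S0_A S E) L0 (S0_A S E)"
  shows "pcp_exact lam (L0 + S0_B S (sign_match S E)) L0 (S0_B S (sign_match S E))"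
  using pcp_exact_drop_sparse_part assms S0_A_split_sign_match by metis

lemma model_B_pmf_eq_map_sign_match:
  assumes "0 \<le> rho" "rho \<le> 1/2"
  shows "model_B_pmf rho = map_pmf (sign_match S) (model_A_pmf rho)"
proof -
  have "model_B_pmf rho =
      Pi_pmf UNIV False (\<lambda>x. map_pmf (\<lambda>e. e = entry_sign S x) (sign_entry_pmf rho))"
    unfolding model_B_pmf_def
    by (intro Pi_pmf_cong refl map_pmf_sign_entry_eq_sign[symmetric] assms)
      (auto simp: entry_sign_def split: if_splits)
  also have "\<dots> = map_pmf (\<lambda>E x. if x \<in> UNIV then E x = entry_sign S x else False) (model_A_pmf rho)"
    unfolding model_A_pmf_def by (rule Pi_pmf_map_dependent) simp
  also have "\<dots> = map_pmf (sign_match S) (model_A_pmf rho)"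
    by (intro map_pmf_cong) (auto simp: sign_match_def)
  finally show ?thesis .
qed

theorem theorem2p2:
  fixes L0 S :: "real^'n^'n" and mu lam rho_s :: real
  assumes "incoherent mu L0"
    and "lam > 0"
    and "0 < rho_s" and "rho_s \<le> 1/2"
  shows "measure_pmf.prob (model_B_pmf rho_s) {\<Omega>. pcp_exact lam (L0 + S0_B S \<Omega>) L0 (S0_B S \<Omega>)}
       \<ge> measure_pmf.prob (model_A_pmf rho_s) {E. pcp_exact lam (L0 + S0_A S E) L0 (S0_A S E)}"
proof -
  let ?exact_B = "{\<Omega>. pcp_exact lam (L0 + S0_B S \<Omega>) L0 (S0_B S \<Omega>)}"
  let ?exact_A = "{E. pcp_exact lam (L0 + S0_A S E) L0 (S0_A S E)}"
  have "?exact_A \<subseteq> sign_match S -` ?exact_B"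
    using pcp_exact_S0_A_imp_S0_B[of lam L0 S] \<open>lam > 0\<close> by auto
  then have "measure_pmf.prob (model_A_pmf rho_s) ?exact_A
      \<le> measure_pmf.prob (model_A_pmf rho_s) (sign_match S -` ?exact_B)"
    by (rule measure_pmf.finite_measure_mono) simp
  also have "\<dots> = measure_pmf.prob (model_B_pmf rho_s) ?exact_B"
    using assms(3,4) by (simp add: model_B_pmf_eq_map_sign_match[of rho_s S] measure_map_pmf)
  finally show ?thesis .
qed

end
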